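(* Let $C_{drel}>0$ be a constant such that for all $\mathcal{T}\in\mathbb{T}$ and all refinements $\mathcal{T}_*\in\mathbb{T}$ of $\mathcal{T}$, $\|u_{\mathcal{T}_*}-u_{\mathcal{T}}\|^2_{H^1(\Omega)}\le C_{drel}\,\eta^2_{\mathcal{T}}(u_{\mathcal{T}},\mathcal{T}\setminus\mathcal{T}_* )$, and let $\delta>0$, $C_{est}>0$ be constants such that for all such $\mathcal{T},\mathcal{T}_*$, $\eta^2_{\mathcal{T}}(u_{\mathcal{T}},\mathcal{T}\cap\mathcal{T}_* )\le(1+\delta)\eta^2_{\mathcal{T}_*}(u_{\mathcal{T}_*},\mathcal{T}\cap\mathcal{T}_* )+C_{est}\|u_{\mathcal{T}_*}-u_{\mathcal{T}}\|^2_{H^1(\Omega)}$. Let $\theta\in\big(0,1/(1+C_{est}C_{drel})\big)$ and $\lambda:=\big(1-(1+C_{est}C_{drel})\theta\big)/(1+\delta)$. Let $\mathcal{T}\in\mathbb{T}$ and let $\mathcal{T}_*\in\mathbb{T}$ be any refinement of $\mathcal{T}$. If $\eta^2_{\mathcal{T}_*}(u_{\mathcal{T}_*})\le\lambda\,\eta^2_{\mathcal{T}}(u_{\mathcal{T}})$, then \[ \eta^2_{\mathcal{T}}(u_{\mathcal{T}},\mathcal{T}\setminus\mathcal{T}_* )\ge\theta\,\eta^2_{\mathcal{T}}(u_{\mathcal{T}}). \]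
   Context: Let $\Omega\subset\mathbb{R}^2$ be a bounded polygonal domain whose boundary $\Gamma$ is the union of three mutually disjoint parts $\Gamma_0,\Gamma_A,\Gamma_C$, each a line segment ($\Gamma_A,\Gamma_C$ of positive length). Let $\sigma\in L^\infty(\Omega)$ with $\sigma_1\le\sigma\le\sigma_2$ a.e. ($0<\sigma_1\le\sigma_2$), $g\in L^2(\Gamma_A)$, and $f$ either $f_1(t)=C_1t+C_2t^3$ or $f_2(t)=C_5(e^{C_3t}-e^{-C_4t})$ with positive constants $C_i$. $\mathcal{T}_0$ is a conforming shape-regular triangulation of $\bar\Omega$ with $\sigma|_K\in W^{1,\infty}(K)$ for $K\in\mathcal{T}_0$; $\mathbb{T}$ is the set of conforming triangulations obtained from $\mathcal{T}_0$ by finitely many newest vertex bisections; a refinement $\mathcal{T}_*$ of $\mathcal{T}$ is obtained from $\mathcal{T}$ by finitely many bisections; $\mathcal{T}\cap\mathcal{T}_*$ is the set of elements in both meshes and $\mathcal{T}\setminus\mathcal{T}_*$ the set of elements of $\mathcal{T}$ not in $\mathcal{T}_*$. Fix $m\ge1$; $V_{\mathcal{T}}=\{v\in H^1(\Omega):v|_K\in P_m(K)\,\forall K\in\mathcal{T}\}$, and $u_{\mathcal{T}}\in V_{\mathcal{T}}$ is the unique solution of $\int_\Omega\sigma\nabla u_{\mathcal{T}}\cdot\nabla v\,dx+\int_{\Gamma_C}f(u_{\mathcal{T}})v\,ds=\int_{\Gamma_A}gv\,ds$ for all $v\in V_{\mathcal{T}}$. Estimator: $h_K=|K|^{1/2}$;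 for an edge $F$, $n_F$ a fixed unit normal ($=n$, outward, on $\Gamma$). For $v\in V_{\mathcal{T}}$: $R_K(v)=\nabla\cdot(\sigma\nabla v)$ on $K$; $J_F(v)$ = jump of $\sigma\nabla v\cdot n_F$ across interior $F$, $\sigma\nabla v\cdot n$ on $\Gamma_0$, $g-\sigma\nabla v\cdot n$ on $\Gamma_A$, $f(v)+\sigma\nabla v\cdot n$ on $\Gamma_C$. $\eta_{\mathcal{T}}^2(v,K)=h_K^2\|R_K(v)\|^2_{L^2(K)}+\frac12\sum_{F\subset\partial K\text{ interior}}h_K\|J_F(v)\|^2_{L^2(F)}+\sum_{F\subset\partial K\cap\Gamma}h_K\|J_F(v)\|^2_{L^2(F)}$, $\eta^2_{\mathcal{T}}(v,\mathcal{M})=\sum_{K\in\mathcal{M}}\eta^2_{\mathcal{T}}(v,K)$, $\eta_{\mathcal{T}}(v)=\eta_{\mathcal{T}}(v,\mathcal{T})$. *)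

theory Defs
  imports Complex_Main
begin

text \<open>A mesh is a finite set of elements of type 'k.
  eta T v K is the local squared indicator eta_T^2(v,K) on the mesh T;
  the squared estimator on a set M of elements is the sum over M.\<close>

definition est2 :: "('m \<Rightarrow> 'v \<Rightarrow> 'k \<Rightarrow> real) \<Rightarrow> 'm \<Rightarrow> 'v \<Rightarrow> 'k set \<Rightarrow> real" where
  "est2 eta T v M = (\<Sum>K\<in>M. eta T v K)"

end

theory Submission
  imports Defs
begin

text \<open>Split the estimator on T into the refined part T - Ts and the kept part T \<inter> Ts.
  On the kept part, estimator equivalence compares with the indicators on Ts (which are
  at most lam times the total estimator on T) plus C_est times the discrete error, and
  discrete reliability bounds that error by C_drel times the refined part. Collecting the
  refined part on one side gives (1 + C_est C_drel) theta times the total at most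
  (1 + C_est C_drel) times the refined part.\<close>

lemma est2_split:
  assumes "finite S"
  shows "est2 eta S v S = est2 eta S v (S - M) + est2 eta S v (S \<inter> M)"
proof -
  have "S = (S - M) \<union> (S \<inter> M)" by blast
  then have "sum (eta S v) S = sum (eta S v) ((S - M) \<union> (S \<inter> M))" by simp
  also have "\<dots> = sum (eta S v) (S - M) + sum (eta S v) (S \<inter> M)"
    by (rule sum.union_disjoint) (use assms in auto)
  finally show ?thesis by (simp add: est2_def)
qed

lemma est2_mono:
  assumes "finite N" and "M \<subseteq> N" and "\<And>K. eta S v K \<ge> 0"
  shows "est2 eta S v M \<le> est2 eta S v N"
  unfolding est2_def using assms by (intro sum_mono2) auto

lemma marking_from_reduction:
  fixes A B E c theta :: real
  assumes "E = A + B" and "c > 0"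
    and "B \<le> (1 - (1 + c) * theta) * E + c * A"
  shows "theta * E \<le> A"
proof -
  have "(1 + c) * (theta * E) \<le> (1 + c) * A"
    using assms(1,3) by (simp add: algebra_simps)
  then show ?thesis using \<open>c > 0\<close> by simp
qed

theorem lemma6p3:
  fixes Meshes :: "'k set set"
    and refines :: "'k set \<Rightarrow> 'k set \<Rightarrow> bool"
    and u :: "'k set \<Rightarrow> 'v::real_normed_vector"
    and eta :: "'k set \<Rightarrow> 'v \<Rightarrow> 'k \<Rightarrow> real"
    and C_drel C_est delta theta lam :: real
    and T Ts :: "'k set"
  assumes finite_meshes: "\<And>S. S \<in> Meshes \<Longrightarrow> finite S"
    and eta_nonneg: "\<And>S v K. eta S v K \<ge> 0"
    and C_drel_pos: "C_drel > 0"
    and drel: "\<And>S Ss. S \<in> Meshes \<Longrightarrow> Ss \<in> Meshes \<Longrightarrow> refines Ss S \<Longrightarrow>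
        (norm (u Ss - u S))\<^sup>2 \<le> C_drel * est2 eta S (u S) (S - Ss)"
    and delta_pos: "delta > 0" and C_est_pos: "C_est > 0"
    and est: "\<And>S Ss. S \<in> Meshes \<Longrightarrow> Ss \<in> Meshes \<Longrightarrow> refines Ss S \<Longrightarrow>
        est2 eta S (u S) (S \<inter> Ss)
          \<le> (1 + delta) * est2 eta Ss (u Ss) (S \<inter> Ss) + C_est * (norm (u Ss - u S))\<^sup>2"
    and theta_pos: "0 < theta" and theta_less: "theta < 1 / (1 + C_est * C_drel)"
    and lam_def: "lam = (1 - (1 + C_est * C_drel) * theta) / (1 + delta)"
    and T_mesh: "T \<in> Meshes" and Ts_mesh: "Ts \<in> Meshes" and refine: "refines Ts T"
    and reduction: "est2 eta Ts (u Ts) Ts \<le> lam * est2 eta T (u T) T"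
  shows "est2 eta T (u T) (T - Ts) \<ge> theta * est2 eta T (u T) T"
proof -
  let ?E = "est2 eta T (u T) T" and ?A = "est2 eta T (u T) (T - Ts)"
  let ?err = "(norm (u Ts - u T))\<^sup>2"
  have kept_fine: "est2 eta Ts (u Ts) (T \<inter> Ts) \<le> lam * ?E"
    using est2_mono[of Ts "T \<inter> Ts" eta Ts "u Ts"] finite_meshes[OF Ts_mesh] eta_nonneg
      reduction by auto
  have "(1 + delta) * est2 eta Ts (u Ts) (T \<inter> Ts) \<le> (1 + delta) * (lam * ?E)"
    using kept_fine delta_pos by (simp add: mult_left_mono)
  also have "\<dots> = (1 - (1 + C_est * C_drel) * theta) * ?E"
    using delta_pos by (simp add: lam_def)
  finally have kept: "(1 + delta) * est2 eta Ts (u Ts) (T \<inter> Ts) \<le> (1 - (1 + C_est * C_drel) * theta) * ?E" .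
  have "C_est * ?err \<le> C_est * C_drel * ?A"
    using drel[OF T_mesh Ts_mesh refine] C_est_pos by (simp add: mult_left_mono)
  with kept est[OF T_mesh Ts_mesh refine]
  have "est2 eta T (u T) (T \<inter> Ts) \<le> (1 - (1 + C_est * C_drel) * theta) * ?E + C_est * C_drel * ?A"
    by linarith
  then show ?thesis
    using marking_from_reduction est2_split[OF finite_meshes[OF T_mesh]] C_est_pos C_drel_pos
    by (metis mult_pos_pos)
qed

end
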